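(* Let $\Pi_q$ be a projective plane (not necessarily Desarguesian) of order $q$, let $\mu\ge 2$ be an integer, and let $s_\mu(2,q)$ be the smallest size of a $(1,\mu)$-saturating set in $\Pi_q$. Put $\delta=1/\sqrt{(q+1)\ln(q+1)}$. Then \[ s_\mu(2,q)\le 2D\sqrt{(q+1)\ln(q+1)}+2 \] holds in each of the following cases: (a) $D=2.4$, if $\mu=2$ and $q\ge 97$; (b) $D=2.6$, if $\mu=3$ and $q\ge 181$; (c) $D=2.8$, if $\mu=4$ and $q\ge 125$; (d) $D=\mu+1$, if $\mu\le\sqrt{q}$ and $q\ge 4$; (e) $D=2\mu-1$, if $\mu\le \frac12\big((1-\delta)q-\delta+1\big)+1$ and $q\ge 3$.
   Context: A point set $S\subset\Pi_q$ is $(1,\mu)$-saturating if for every point $Q\in\Pi_q\setminus S$ the number of secants of $S$ through $Q$, counted with multiplicity, is at least $\mu$, where a line $\ell$ meeting $S$ in at least two points is a secant and has multiplicity $\binom{\#(\ell\cap S)}{2}$. Here $\ln$ is the natural logarithm. *)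

theory Defs
  imports Complex_Main
begin

definition projective_plane :: "'a set \<Rightarrow> 'a set set \<Rightarrow> bool" where
  "projective_plane Pts Lns \<longleftrightarrow>
     finite Pts \<and>
     (\<forall>l\<in>Lns. l \<subseteq> Pts) \<and>
     (\<forall>p\<in>Pts. \<forall>r\<in>Pts. p \<noteq> r \<longrightarrow> (\<exists>!l. l \<in> Lns \<and> p \<in> l \<and> r \<in> l)) \<and>
     (\<forall>l\<in>Lns. \<forall>m\<in>Lns. l \<noteq> m \<longrightarrow> (\<exists>!p. p \<in> Pts \<and> p \<in> l \<and> p \<in> m)) \<and>
     (\<exists>F. F \<subseteq> Pts \<and> card F = 4 \<and>
        (\<forall>l\<in>Lns. card (l \<inter> F) \<le> 2))"

definition projective_plane_of_order :: "'a set \<Rightarrow> 'a set set \<Rightarrow> nat \<Rightarrow> bool" where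
  "projective_plane_of_order Pts Lns q \<longleftrightarrow>
     projective_plane Pts Lns \<and> (\<forall>l\<in>Lns. card l = q + 1)"

definition saturating :: "'a set \<Rightarrow> 'a set set \<Rightarrow> nat \<Rightarrow> 'a set \<Rightarrow> bool" where
  "saturating Pts Lns \<mu> S \<longleftrightarrow>
     S \<subseteq> Pts \<and>
     (\<forall>Q\<in>Pts - S.
        (\<Sum>l\<in>{l\<in>Lns. Q \<in> l \<and> card (l \<inter> S) \<ge> 2}. card (l \<inter> S) choose 2) \<ge> \<mu>)"

definition s_min :: "'a set \<Rightarrow> 'a set set \<Rightarrow> nat \<Rightarrow> nat" where
  "s_min Pts Lns \<mu> = (LEAST n. \<exists>S. saturating Pts Lns \<mu> S \<and> card S = n)"

end

theory Submission
  imports Defs "HOL-Library.FuncSet"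
begin

text \<open>Take two lines \<open>l1\<close>, \<open>l2\<close> through a point \<open>P\<close>, a set \<open>A\<close> of \<open>k\<close> points of
  \<open>l1 - {P}\<close> and a set \<open>B\<close> of points of \<open>l2\<close>. Points on the two lines are saturated by the lines
  themselves, and a point \<open>Q\<close> off them lies on a secant for every point of \<open>B\<close> that is the image of
  a point of \<open>A\<close> under the perspectivity with centre \<open>Q\<close>. A random \<open>k\<close>-tuple of points of
  \<open>l2 - {P}\<close> misses all but fewer than \<open>\<mu>\<close> points of a fixed such image with probability at
  most \<open>k^\<mu> (1 - (k + 1 - \<mu>)/q)^k < (q + 1)^-2\<close> as soon as \<open>k (k + 1 - \<mu>) > (\<mu> + 2) q ln (q + 1)\<close>,
  so by the union bound over the fewer than \<open>(q + 1)^2\<close> centres some tuple works for all of them.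
  With \<open>k\<close> about \<open>c sqrt ((q + 1) ln (q + 1))\<close> this gives a saturating set of size
  \<open>2 k + \<mu> + 1\<close>; when \<open>k\<close> would exceed \<open>q\<close>, all of \<open>l1 - {P}\<close> is taken instead.\<close>

lemma card_subsets_card_less_le:
  assumes X: "finite X" and mu: "1 \<le> \<mu>" "\<mu> \<le> card X"
  shows "card {Y. Y \<subseteq> X \<and> card Y < \<mu>} \<le> card X ^ \<mu>"
proof -
  have eq: "{Y. Y \<subseteq> X \<and> card Y < \<mu>} = (\<Union>c<\<mu>. {Y. Y \<subseteq> X \<and> card Y = c})" by auto
  have "card {Y. Y \<subseteq> X \<and> card Y < \<mu>} \<le> (\<Sum>c<\<mu>. card {Y. Y \<subseteq> X \<and> card Y = c})"
    unfolding eq by (rule card_UN_le) simp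
  also have "\<dots> = (\<Sum>c<\<mu>. card X choose c)" using n_subsets[OF X] by simp
  also have "\<dots> \<le> (\<Sum>c<\<mu>. card X ^ (\<mu> - 1))"
  proof (rule sum_mono)
    fix c assume c: "c \<in> {..<\<mu>}"
    have "card X choose c \<le> card X ^ c" using c mu by (intro binomial_le_pow) auto
    also have "\<dots> \<le> card X ^ (\<mu> - 1)" using c mu by (intro power_increasing) auto
    finally show "card X choose c \<le> card X ^ (\<mu> - 1)" .
  qed
  also have "\<dots> \<le> card X * card X ^ (\<mu> - 1)" using mu by simp
  also have "\<dots> = card X ^ \<mu>" using mu by (cases \<mu>) auto
  finally show ?thesis .
qed

text \<open>A tuple missing all but fewer than \<open>\<mu>\<close> points of \<open>X\<close> takes its values in
  \<open>(U - X) \<union> Y\<close> for some \<open>Y \<subseteq> X\<close> with \<open>card Y < \<mu>\<close>.\<close>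
lemma card_PiE_hits_less_le:
  assumes U: "finite U" and XU: "X \<subseteq> U" and mu: "1 \<le> \<mu>" "\<mu> \<le> card X"
  shows "card {b \<in> PiE {..<m} (\<lambda>_. U). card (X \<inter> b ` {..<m}) < \<mu>}
          \<le> card X ^ \<mu> * (card U - card X + (\<mu> - 1)) ^ m"
proof -
  have X: "finite X" using U XU finite_subset by blast
  define YY where "YY = {Y. Y \<subseteq> X \<and> card Y < \<mu>}"
  have finYY: "finite YY" using X unfolding YY_def by simp
  have fin: "finite (PiE {..<m} (\<lambda>_. (U - X) \<union> Y))" if "Y \<in> YY" for Y
    using that U X unfolding YY_def by (intro finite_PiE) (auto intro: finite_subset)
  have "{b \<in> PiE {..<m} (\<lambda>_. U). card (X \<inter> b ` {..<m}) < \<mu>}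
     \<subseteq> (\<Union>Y\<in>YY. PiE {..<m} (\<lambda>_. (U - X) \<union> Y))"
  proof
    fix b assume b: "b \<in> {b \<in> PiE {..<m} (\<lambda>_. U). card (X \<inter> b ` {..<m}) < \<mu>}"
    hence "X \<inter> b ` {..<m} \<in> YY" "b \<in> PiE {..<m} (\<lambda>_. (U - X) \<union> (X \<inter> b ` {..<m}))"
      unfolding YY_def by (auto simp: PiE_def Pi_def)
    thus "b \<in> (\<Union>Y\<in>YY. PiE {..<m} (\<lambda>_. (U - X) \<union> Y))" by blast
  qed
  hence "card {b \<in> PiE {..<m} (\<lambda>_. U). card (X \<inter> b ` {..<m}) < \<mu>}
      \<le> card (\<Union>Y\<in>YY. PiE {..<m} (\<lambda>_. (U - X) \<union> Y))"
    using fin finYY by (intro card_mono) auto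
  also have "\<dots> \<le> (\<Sum>Y\<in>YY. card (PiE {..<m} (\<lambda>_. (U - X) \<union> Y)))"
    by (rule card_UN_le[OF finYY])
  also have "\<dots> \<le> (\<Sum>Y\<in>YY. (card U - card X + (\<mu> - 1)) ^ m)"
  proof (rule sum_mono)
    fix Y assume Y: "Y \<in> YY"
    have "card ((U - X) \<union> Y) \<le> card (U - X) + card Y" by (rule card_Un_le)
    also have "\<dots> \<le> card U - card X + (\<mu> - 1)"
      using Y card_Diff_subset[OF X XU] unfolding YY_def by auto
    finally show "card (PiE {..<m} (\<lambda>_. (U - X) \<union> Y)) \<le> (card U - card X + (\<mu> - 1)) ^ m"
      by (simp add: card_PiE power_mono)
  qed
  also have "\<dots> = card YY * (card U - card X + (\<mu> - 1)) ^ m" by simp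
  also have "\<dots> \<le> card X ^ \<mu> * (card U - card X + (\<mu> - 1)) ^ m"
    using card_subsets_card_less_le[OF X mu] unfolding YY_def by (intro mult_right_mono) auto
  finally show ?thesis .
qed

lemma ex_not_in_UN_of_card_lt:
  assumes T: "finite T" and R: "finite R"
    and bad: "\<And>Q. Q \<in> R \<Longrightarrow> Bad Q \<subseteq> T \<and> card (Bad Q) \<le> M"
    and lt: "card R * M < card T"
  shows "\<exists>b\<in>T. \<forall>Q\<in>R. b \<notin> Bad Q"
proof (rule ccontr)
  assume "\<not> ?thesis"
  hence "T \<subseteq> (\<Union>Q\<in>R. Bad Q)" by blast
  hence "card T \<le> card (\<Union>Q\<in>R. Bad Q)"
    using bad T by (intro card_mono) (auto intro: finite_subset)
  also have "\<dots> \<le> (\<Sum>Q\<in>R. card (Bad Q))" using R by (rule card_UN_le)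
  also have "\<dots> \<le> card R * M" using bad sum_bounded_above[of R "\<lambda>Q. card (Bad Q)" M] by auto
  finally show False using lt by simp
qed

text \<open>With \<open>x = (k + 1 - \<mu>) / q\<close>:
  \<open>(q - k + \<mu> - 1)^k = q^k (1 - x)^k \<le> q^k exp (- k x) < q^k / (q + 1)^(\<mu> + 2)\<close>.\<close>
lemma plane_union_bound_lt_power:
  fixes k \<mu> q :: nat
  assumes mu: "1 \<le> \<mu>" and k: "\<mu> + 1 \<le> k" "k \<le> q"
    and H: "(real \<mu> + 2) * real q * ln (real q + 1) < real k * (real k + 1 - real \<mu>)"
  shows "(q + 1)^2 * (k^\<mu> * (q - k + (\<mu> - 1))^k) < q^k"
proof -
  define n where "n = real q + 1"
  define x where "x = (real k + 1 - real \<mu>) / real q"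
  have q0: "real q > 0" using k by simp
  have n1: "n > 1" using q0 n_def by simp
  have eqx: "real (q - k + (\<mu> - 1)) = real q * (1 - x)"
    using k mu q0 by (simp add: x_def field_simps of_nat_diff)
  have x1: "0 \<le> 1 - x" using eqx q0 by (metis of_nat_0_le_iff zero_le_mult_iff not_le)
  have "(1 - x) ^ k \<le> exp (-x) ^ k"
    using x1 by (intro power_mono) (auto simp: exp_ge_add_one_self [of "-x", simplified])
  also have "\<dots> = exp (- (real k * x))" by (simp add: exp_of_nat_mult[symmetric])
  also have "\<dots> < exp (- (real (\<mu> + 2) * ln n))"
    using H q0 unfolding x_def n_def by (simp add: field_simps)
  also have "\<dots> = 1 / n ^ (\<mu> + 2)"
    using exp_of_nat_mult[of "\<mu> + 2" "ln n"] n1 by (simp add: exp_minus inverse_eq_divide)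
  finally have e: "(1 - x) ^ k < 1 / n ^ (\<mu> + 2)" .
  have kn: "real k ^ \<mu> \<le> n ^ \<mu>" using k n_def by (intro power_mono) auto
  have "real ((q + 1)^2 * (k^\<mu> * (q - k + (\<mu> - 1))^k)) = n^2 * real k ^ \<mu> * (real q ^ k * (1 - x) ^ k)"
    unfolding of_nat_mult of_nat_power eqx by (simp add: n_def power_mult_distrib)
  also have "\<dots> < n^2 * n ^ \<mu> * (real q ^ k * (1 / n ^ (\<mu> + 2)))"
    using kn e x1 n1 q0 k by (intro mult_le_less_imp_less mult_strict_left_mono) auto
  also have "\<dots> = real q ^ k" using n1 by (simp add: field_simps power_add power2_eq_square)
  finally show ?thesis by (metis of_nat_less_iff of_nat_power)
qed

lemma le_Suc_choose_two: "\<mu> \<le> Suc \<mu> choose 2"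
  using binomial_Suc_Suc[of \<mu> 1] by (simp add: numeral_2_eq_2)

lemma le_ln_of_three_power_le:
  assumes "3 ^ n \<le> (x :: real)"
  shows "real n \<le> ln x"
proof -
  have "exp (real n) = exp 1 ^ n" by (simp flip: exp_of_nat_mult)
  also have "\<dots> \<le> 3 ^ n" using exp_le by (intro power_mono) auto
  finally have "exp (real n) \<le> x" using assms by linarith
  moreover have "0 < x" using assms by (metis less_le_trans zero_less_numeral zero_less_power)
  ultimately show ?thesis by (subst ln_ge_iff) auto
qed

lemma Suc_le_of_le_sqrt:
  assumes "real m \<le> sqrt (real q)" "2 \<le> q"
  shows "m + 1 \<le> q"
proof -
  have "real (m * m) \<le> real q"
    using assms(1) real_sqrt_le_iff[of "real m ^ 2" "real q"] by (simp add: power2_eq_square)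
  hence "m * m \<le> q" by linarith
  moreover have "m + 1 \<le> m * m" if "2 \<le> m" using mult_le_mono1[OF that, of m] that by linarith
  ultimately show ?thesis using assms(2) by (cases "2 \<le> m") auto
qed

lemma Suc_le_of_less_half:
  assumes "real m < (real q + 3) / 2" "3 \<le> q"
  shows "m + 1 \<le> q"
proof -
  have "real (2 * m) < real (q + 3)" using assms(1) by simp
  hence "2 * m < q + 3" by (simp only: of_nat_less_iff)
  thus ?thesis using assms(2) by presburger
qed

locale plane_of_order =
  fixes Pts :: "'a set" and Lns :: "'a set set" and q :: nat
  assumes plane: "projective_plane_of_order Pts Lns q"
begin

lemma finite_Pts: "finite Pts"
  using plane by (simp add: projective_plane_of_order_def projective_plane_def)

lemma line_subset_Pts: "l \<in> Lns \<Longrightarrow> l \<subseteq> Pts"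
  using plane by (simp add: projective_plane_of_order_def projective_plane_def)

lemma finite_line: "l \<in> Lns \<Longrightarrow> finite l"
  using line_subset_Pts finite_Pts finite_subset by blast

lemma card_line: "l \<in> Lns \<Longrightarrow> card l = q + 1"
  using plane by (simp add: projective_plane_of_order_def)

lemma line_ne_empty: "l \<in> Lns \<Longrightarrow> l \<noteq> {}"
  using card_line by fastforce

lemma ex1_line_through:
  "p \<in> Pts \<Longrightarrow> r \<in> Pts \<Longrightarrow> p \<noteq> r \<Longrightarrow> \<exists>!l. l \<in> Lns \<and> p \<in> l \<and> r \<in> l"
  using plane by (simp add: projective_plane_of_order_def projective_plane_def)

lemma line_eqI:
  "l \<in> Lns \<Longrightarrow> m \<in> Lns \<Longrightarrow> p \<in> l \<Longrightarrow> p \<in> m \<Longrightarrow> r \<in> l \<Longrightarrow> r \<in> m \<Longrightarrow> p \<noteq> r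
    \<Longrightarrow> l = m"
  using ex1_line_through[of p r] line_subset_Pts by blast

lemma lines_meet: "l \<in> Lns \<Longrightarrow> m \<in> Lns \<Longrightarrow> \<exists>p. p \<in> l \<and> p \<in> m"
proof (cases "l = m")
  case False
  assume "l \<in> Lns" "m \<in> Lns"
  then show ?thesis
    using False plane unfolding projective_plane_of_order_def projective_plane_def by metis
qed (use line_ne_empty in blast)

definition join :: "'a \<Rightarrow> 'a \<Rightarrow> 'a set" where
  "join p r = (THE l. l \<in> Lns \<and> p \<in> l \<and> r \<in> l)"

lemma join:
  assumes "p \<in> Pts" "r \<in> Pts" "p \<noteq> r"
  shows "join p r \<in> Lns" "p \<in> join p r" "r \<in> join p r"
  using theI'[OF ex1_line_through[OF assms]] unfolding join_def by auto

lemma join_eq: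
  assumes "l \<in> Lns" "p \<in> l" "r \<in> l" "p \<noteq> r"
  shows "join p r = l"
proof -
  have "p \<in> Pts" "r \<in> Pts" using assms line_subset_Pts by auto
  thus ?thesis using line_eqI[OF join(1) assms(1) join(2) assms(2) join(3) assms(3,4)] assms(4) by blast
qed

lemma exists_point_off_line:
  obtains l R where "l \<in> Lns" "R \<in> Pts" "R \<notin> l"
proof -
  obtain F where F: "F \<subseteq> Pts" "card F = 4" "\<forall>l\<in>Lns. card (l \<inter> F) \<le> 2"
    using plane by (auto simp: projective_plane_of_order_def projective_plane_def)
  have "finite F" using F(2) by (intro card_ge_0_finite) simp
  obtain T where T: "T \<subseteq> F" "card T = 3"
    using obtain_subset_with_card_n[of 3 F] F(2) by auto
  then obtain x y z where xyz: "T = {x, y, z}" "x \<noteq> y"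
    unfolding card_3_iff by blast
  have Pts: "x \<in> Pts" "y \<in> Pts" "z \<in> Pts" using xyz(1) T(1) F(1) by auto
  note l = join[OF Pts(1,2) xyz(2)]
  have "z \<notin> join x y"
  proof
    assume "z \<in> join x y"
    hence "T \<subseteq> join x y \<inter> F" using l xyz(1) T(1) by auto
    hence "card T \<le> card (join x y \<inter> F)" using \<open>finite F\<close> by (intro card_mono) auto
    moreover have "card (join x y \<inter> F) \<le> 2" using F(3) l(1) by blast
    ultimately show False using T(2) by simp
  qed
  thus ?thesis using that l(1) Pts(3) by blast
qed

lemma exists_two_lines:
  obtains l1 l2 P where "l1 \<in> Lns" "l2 \<in> Lns" "l1 \<noteq> l2" "P \<in> l1" "P \<in> l2"
proof -
  obtain l R where l: "l \<in> Lns" "R \<in> Pts" "R \<notin> l" by (rule exists_point_off_line)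
  then obtain P where "P \<in> l" using line_ne_empty by blast
  hence "P \<in> Pts" "R \<noteq> P" using l line_subset_Pts by auto
  show ?thesis
  proof (rule that[of l "join R P" P])
    show "join R P \<in> Lns" "P \<in> join R P" using join[OF l(2) \<open>P \<in> Pts\<close> \<open>R \<noteq> P\<close>] by auto
    show "l \<noteq> join R P" using join[OF l(2) \<open>P \<in> Pts\<close> \<open>R \<noteq> P\<close>] l by auto
  qed (use l \<open>P \<in> l\<close> in auto)
qed

text \<open>Every point lies on one of the \<open>q + 1\<close> lines joining a point \<open>R\<close> off a line \<open>l\<close> to the points
  of \<open>l\<close>.\<close>
lemma card_Pts_le: "card Pts \<le> (q + 1)^2"
proof -
  obtain l R where l: "l \<in> Lns" "R \<in> Pts" "R \<notin> l" by (rule exists_point_off_line)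
  have on_l: "x \<in> Pts" "R \<noteq> x" if "x \<in> l" for x
    using that l line_subset_Pts by auto
  have join_l: "join R x \<in> Lns" if "x \<in> l" for x
    using join(1)[OF l(2) on_l[OF that]] .
  have "Pts \<subseteq> (\<Union>x\<in>l. join R x)"
  proof
    fix Z assume Z: "Z \<in> Pts"
    show "Z \<in> (\<Union>x\<in>l. join R x)"
    proof (cases "Z = R")
      case True
      then show ?thesis using line_ne_empty[OF l(1)] join[OF l(2)] on_l by blast
    next
      case False
      note j = join[OF l(2) Z False[symmetric]]
      obtain x where x: "x \<in> join R Z" "x \<in> l" using lines_meet[OF j(1) l(1)] by blast
      have "join R x = join R Z" using join_eq[OF j(1) j(2) x(1)] on_l[OF x(2)] by simp
      thus ?thesis using x(2) j(3) by auto
    qed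
  qed
  hence "card Pts \<le> card (\<Union>x\<in>l. join R x)"
    using finite_line l(1) join_l by (intro card_mono) auto
  also have "\<dots> \<le> (\<Sum>x\<in>l. card (join R x))" by (rule card_UN_le) (use finite_line l in auto)
  also have "\<dots> = (\<Sum>x\<in>l. q + 1)" using card_line join_l by simp
  also have "\<dots> = (q + 1)^2" using card_line l(1) by (simp add: power2_eq_square)
  finally show ?thesis .
qed

definition secants :: "'a set \<Rightarrow> 'a \<Rightarrow> 'a set set" where
  "secants S Q = {l \<in> Lns. Q \<in> l \<and> 2 \<le> card (l \<inter> S)}"

definition secant_mult :: "'a set \<Rightarrow> 'a \<Rightarrow> nat" where
  "secant_mult S Q = (\<Sum>l\<in>secants S Q. card (l \<inter> S) choose 2)"

lemma saturating_iff:
  "saturating Pts Lns \<mu> S \<longleftrightarrow> S \<subseteq> Pts \<and> (\<forall>Q\<in>Pts - S. \<mu> \<le> secant_mult S Q)"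
  by (simp add: saturating_def secant_mult_def secants_def)

lemma finite_secants: "finite (secants S Q)"
proof (rule finite_subset)
  show "secants S Q \<subseteq> Pow Pts" using line_subset_Pts by (auto simp: secants_def)
qed (simp add: finite_Pts)

lemma choose_two_le_secant_mult:
  assumes "l \<in> Lns" "Q \<in> l" "C \<subseteq> l \<inter> S"
  shows "card C choose 2 \<le> secant_mult S Q"
proof (cases "2 \<le> card (l \<inter> S)")
  case True
  have "card C \<le> card (l \<inter> S)" using assms finite_line by (intro card_mono) auto
  hence "card C choose 2 \<le> card (l \<inter> S) choose 2" by (rule binomial_right_mono)
  also have "\<dots> \<le> secant_mult S Q"
    using True assms unfolding secant_mult_def secants_def
    by (intro member_le_sum) (auto simp: finite_secants[unfolded secants_def])
  finally show ?thesis .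
next
  case False
  have "card C \<le> card (l \<inter> S)" using assms finite_line by (intro card_mono) auto
  thus ?thesis using False by (simp add: binomial_eq_0)
qed

lemma card_secants_le_secant_mult: "card (secants S Q) \<le> secant_mult S Q"
proof -
  have "1 \<le> card (l \<inter> S) choose 2" if "l \<in> secants S Q" for l
    using that binomial_right_mono[of 2 "card (l \<inter> S)" 2] by (simp add: secants_def)
  hence "(\<Sum>l\<in>secants S Q. 1) \<le> secant_mult S Q" unfolding secant_mult_def by (rule sum_mono)
  thus ?thesis by simp
qed

lemma secantI:
  assumes "l \<in> Lns" "Q \<in> l" "a \<in> l \<inter> S" "b \<in> l \<inter> S" "a \<noteq> b"
  shows "l \<in> secants S Q"
proof -
  have "card {a, b} \<le> card (l \<inter> S)" using assms finite_line by (intro card_mono) auto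
  thus ?thesis using assms by (simp add: secants_def)
qed

definition persp :: "'a set \<Rightarrow> 'a \<Rightarrow> 'a \<Rightarrow> 'a" where
  "persp l Q a = (THE y. y \<in> l \<and> y \<in> join Q a)"

context
  fixes l1 l2 P Q
  assumes lines: "l1 \<in> Lns" "l2 \<in> Lns" "l1 \<noteq> l2" "P \<in> l1" "P \<in> l2"
    and centre: "Q \<in> Pts" "Q \<notin> l1" "Q \<notin> l2"
begin

lemma not_in_other_line: "a \<in> l1 - {P} \<Longrightarrow> a \<notin> l2"
  using lines line_eqI by blast

lemma join_centre:
  assumes "a \<in> l1 \<union> l2"
  shows "join Q a \<in> Lns" "Q \<in> join Q a" "a \<in> join Q a" "join Q a \<noteq> l2"
  using assms join[of Q a] centre lines line_subset_Pts by auto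

lemma persp:
  assumes a: "a \<in> l1 - {P}"
  shows "persp l2 Q a \<in> l2 - {P}" "persp l2 Q a \<in> join Q a"
proof -
  note j = join_centre[of a, OF UnI1[OF DiffD1[OF a]]]
  have "\<exists>!y. y \<in> l2 \<and> y \<in> join Q a"
    using lines_meet[OF lines(2) j(1)] line_eqI[OF lines(2) j(1)] j(4) by metis
  from theI'[OF this] have t: "persp l2 Q a \<in> l2" "persp l2 Q a \<in> join Q a"
    unfolding persp_def by auto
  have "join Q a \<noteq> l1" using j a centre by auto
  hence "P \<notin> join Q a" using line_eqI[OF j(1) lines(1) _ lines(4) _] a j by blast
  thus "persp l2 Q a \<in> l2 - {P}" "persp l2 Q a \<in> join Q a" using t by auto
qed

lemma join_persp: "a \<in> l1 - {P} \<Longrightarrow> join Q (persp l2 Q a) = join Q a"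
  using persp join_centre join_eq centre by (metis DiffD1 UnI1 UnI2)

lemma inj_on_persp: "inj_on (persp l2 Q) (l1 - {P})"
proof
  fix a b assume a: "a \<in> l1 - {P}" and b: "b \<in> l1 - {P}" and e: "persp l2 Q a = persp l2 Q b"
  have "join Q a = join Q b" using join_persp[OF a] join_persp[OF b] e by simp
  hence "b \<in> join Q a" using join_centre[of b] b by simp
  moreover have "join Q a \<noteq> l1" using join_centre[of a] a centre by auto
  ultimately show "a = b" using line_eqI[OF join_centre(1) lines(1)] join_centre(3) a b by blast
qed

lemma persp_image: "persp l2 Q ` (l1 - {P}) = l2 - {P}"
proof (rule card_subset_eq)
  show "finite (l2 - {P})" using finite_line lines by simp
  show "persp l2 Q ` (l1 - {P}) \<subseteq> l2 - {P}" using persp by auto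
  show "card (persp l2 Q ` (l1 - {P})) = card (l2 - {P})"
    using card_image[OF inj_on_persp] card_line finite_line lines by simp
qed


lemma card_persp_image_inter_le_secant_mult:
  assumes A: "A \<subseteq> l1 - {P}" and B: "B \<subseteq> l2"
  shows "card (persp l2 Q ` A \<inter> B) \<le> secant_mult (A \<union> B) Q"
proof -
  define Z where "Z = persp l2 Q ` A \<inter> B"
  have secant: "join Q y \<in> secants (A \<union> B) Q" if y: "y \<in> Z" for y
  proof -
    obtain a where a: "a \<in> A" "y = persp l2 Q a" using y Z_def by auto
    have a1: "a \<in> l1 - {P}" using a A by auto
    have "a \<noteq> y" using not_in_other_line[OF a1] persp[OF a1] a by auto
    moreover have "join Q y = join Q a" using join_persp[OF a1] a by simp
    ultimately show ?thesis
      using secantI[of "join Q a" Q a "A \<union> B" y] join_centre[of a] persp[OF a1] a1 a y Z_def by auto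
  qed
  have "inj_on (join Q) Z"
  proof
    fix y y' assume "y \<in> Z" "y' \<in> Z" and e: "join Q y = join Q y'"
    hence "y \<in> l2" "y' \<in> l2" using B Z_def by auto
    note j = join_centre[OF UnI2[OF \<open>y \<in> l2\<close>]] join_centre[OF UnI2[OF \<open>y' \<in> l2\<close>]]
    show "y = y'" using line_eqI[OF lines(2) j(1)] \<open>y \<in> l2\<close> \<open>y' \<in> l2\<close> j e by metis
  qed
  hence "card Z = card (join Q ` Z)" by (simp add: card_image)
  also have "\<dots> \<le> card (secants (A \<union> B) Q)" using secant finite_secants by (intro card_mono) auto
  also have "\<dots> \<le> secant_mult (A \<union> B) Q" by (rule card_secants_le_secant_mult)
  finally show ?thesis unfolding Z_def .
qed

end

lemma saturating_two_lines:
  assumes lines: "l1 \<in> Lns" "l2 \<in> Lns" "l1 \<noteq> l2" "P \<in> l1" "P \<in> l2"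
    and A: "A \<subseteq> l1 - {P}" and B: "B \<subseteq> l2"
    and cA: "\<mu> \<le> card A choose 2" and cB: "\<mu> \<le> card B choose 2"
    and meets: "\<forall>Q \<in> Pts - (l1 \<union> l2). \<mu> \<le> card (persp l2 Q ` A \<inter> B)"
  shows "saturating Pts Lns \<mu> (A \<union> B)"
  unfolding saturating_iff
proof (intro conjI ballI)
  show "A \<union> B \<subseteq> Pts" using A B lines line_subset_Pts by blast
  fix Q assume "Q \<in> Pts - (A \<union> B)"
  then consider "Q \<in> l1" | "Q \<in> l2" | "Q \<in> Pts" "Q \<notin> l1" "Q \<notin> l2" by blast
  then show "\<mu> \<le> secant_mult (A \<union> B) Q"
  proof cases
    case 1
    have "A \<subseteq> l1 \<inter> (A \<union> B)" using A by auto
    from choose_two_le_secant_mult[OF lines(1) 1 this] show ?thesis by (rule le_trans[OF cA])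
  next
    case 2
    have "B \<subseteq> l2 \<inter> (A \<union> B)" using B by auto
    from choose_two_le_secant_mult[OF lines(2) 2 this] show ?thesis by (rule le_trans[OF cB])
  next
    case 3
    have "\<mu> \<le> card (persp l2 Q ` A \<inter> B)" using meets 3 by blast
    also have "\<dots> \<le> secant_mult (A \<union> B) Q"
      by (rule card_persp_image_inter_le_secant_mult[OF lines 3 A B])
    finally show ?thesis .
  qed
qed

lemma s_min_le_card: "saturating Pts Lns \<mu> S \<Longrightarrow> s_min Pts Lns \<mu> \<le> card S"
  unfolding s_min_def by (rule Least_le) blast

text \<open>Take all of \<open>l1 - {P}\<close> and \<open>\<mu> + 1\<close> points of \<open>l2 - {P}\<close>: every perspectivity maps the
  former onto \<open>l2 - {P}\<close>.\<close>
lemma s_min_le_deterministic: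
  assumes "\<mu> + 1 \<le> q"
  shows "s_min Pts Lns \<mu> \<le> q + \<mu> + 1"
proof -
  obtain l1 l2 P where l: "l1 \<in> Lns" "l2 \<in> Lns" "l1 \<noteq> l2" "P \<in> l1" "P \<in> l2"
    by (rule exists_two_lines)
  have card: "card (l1 - {P}) = q" "card (l2 - {P}) = q" using l card_line finite_line by auto
  obtain B where B: "B \<subseteq> l2 - {P}" "card B = \<mu> + 1"
    using obtain_subset_with_card_n[of "\<mu> + 1" "l2 - {P}"] card assms by auto
  have cB: "\<mu> \<le> card B choose 2" using le_Suc_choose_two B by simp
  have cA: "\<mu> \<le> card (l1 - {P}) choose 2"
    using cB B card assms binomial_right_mono[of "\<mu> + 1" q 2] by simp
  have "\<forall>Q \<in> Pts - (l1 \<union> l2). \<mu> \<le> card (persp l2 Q ` (l1 - {P}) \<inter> B)"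
    using persp_image[OF l] B by (simp add: Int_absorb1)
  hence "saturating Pts Lns \<mu> ((l1 - {P}) \<union> B)"
    using saturating_two_lines[OF l _ _ cA cB] B by auto
  hence "s_min Pts Lns \<mu> \<le> card ((l1 - {P}) \<union> B)" by (rule s_min_le_card)
  also have "\<dots> \<le> q + (\<mu> + 1)" using card_Un_le card B by metis
  finally show ?thesis by simp
qed

lemma exists_tuple_meeting_persp_images:
  assumes lines: "l1 \<in> Lns" "l2 \<in> Lns" "l1 \<noteq> l2" "P \<in> l1" "P \<in> l2"
    and A: "A \<subseteq> l1 - {P}" "card A = k"
    and mu: "1 \<le> \<mu>" and k: "\<mu> + 1 \<le> k" "k \<le> q"
    and H: "(real \<mu> + 2) * real q * ln (real q + 1) < real k * (real k + 1 - real \<mu>)"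
  obtains b where "b \<in> PiE {..<k} (\<lambda>_. l2 - {P})"
    "\<forall>Q \<in> Pts - (l1 \<union> l2). \<mu> \<le> card (persp l2 Q ` A \<inter> b ` {..<k})"
proof -
  define U where "U = l2 - {P}"
  have U: "finite U" "card U = q" using lines card_line finite_line unfolding U_def by auto
  define T where "T = PiE {..<k} (\<lambda>_. U)"
  define R where "R = Pts - (l1 \<union> l2)"
  define Bad where "Bad Q = {b \<in> T. card (persp l2 Q ` A \<inter> b ` {..<k}) < \<mu>}" for Q
  define M where "M = k^\<mu> * (q - k + (\<mu> - 1))^k"
  have "Bad Q \<subseteq> T \<and> card (Bad Q) \<le> M" if "Q \<in> R" for Q
  proof -
    have centre: "Q \<in> Pts" "Q \<notin> l1" "Q \<notin> l2" using that R_def by auto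
    have "persp l2 Q ` A \<subseteq> U" using persp_image[OF lines centre] A U_def by blast
    moreover have "card (persp l2 Q ` A) = k"
      using card_image[OF inj_on_subset[OF inj_on_persp[OF lines centre] A(1)]] A(2) by simp
    ultimately show ?thesis
      using card_PiE_hits_less_le[of U "persp l2 Q ` A" \<mu> k] U mu k
      unfolding Bad_def T_def M_def by auto
  qed
  moreover have "card R * M < card T"
  proof -
    have "card R \<le> card Pts" using finite_Pts unfolding R_def by (intro card_mono) auto
    hence "card R \<le> (q + 1)^2" using card_Pts_le by linarith
    hence "card R * M \<le> (q + 1)^2 * M" by (rule mult_right_mono) simp
    also have "\<dots> < q ^ k" using plane_union_bound_lt_power[OF mu k H] unfolding M_def .
    finally show ?thesis using U unfolding T_def by (simp add: card_PiE)
  qed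
  moreover have "finite T" using U unfolding T_def by (simp add: finite_PiE)
  moreover have "finite R" using finite_Pts unfolding R_def by simp
  ultimately obtain b where "b \<in> T" "\<forall>Q\<in>R. b \<notin> Bad Q"
    using ex_not_in_UN_of_card_lt[of T R Bad M] by auto
  thus ?thesis using that unfolding T_def U_def R_def Bad_def by (auto simp: not_less)
qed

lemma s_min_le_random:
  assumes mu: "1 \<le> \<mu>" and k: "\<mu> + 1 \<le> k" "k \<le> q"
    and H: "(real \<mu> + 2) * real q * ln (real q + 1) < real k * (real k + 1 - real \<mu>)"
  shows "s_min Pts Lns \<mu> \<le> 2 * k + \<mu> + 1"
proof -
  obtain l1 l2 P where lines: "l1 \<in> Lns" "l2 \<in> Lns" "l1 \<noteq> l2" "P \<in> l1" "P \<in> l2"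
    by (rule exists_two_lines)
  have card: "card (l1 - {P}) = q" "card (l2 - {P}) = q" using lines card_line finite_line by auto
  obtain A where A: "A \<subseteq> l1 - {P}" "card A = k"
    using obtain_subset_with_card_n[of k "l1 - {P}"] card k by auto
  obtain B where B: "B \<subseteq> l2 - {P}" "card B = \<mu> + 1"
    using obtain_subset_with_card_n[of "\<mu> + 1" "l2 - {P}"] card k by auto
  obtain b where b: "b \<in> PiE {..<k} (\<lambda>_. l2 - {P})"
    "\<forall>Q \<in> Pts - (l1 \<union> l2). \<mu> \<le> card (persp l2 Q ` A \<inter> b ` {..<k})"
    by (rule exists_tuple_meeting_persp_images[OF lines A mu k H])
  define Y where "Y = B \<union> b ` {..<k}"
  have Y: "Y \<subseteq> l2" using B b(1) unfolding Y_def by auto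
  have finY: "finite Y" using Y finite_line lines(2) finite_subset by blast
  have cA: "\<mu> \<le> card A choose 2"
    using le_Suc_choose_two[of \<mu>] binomial_right_mono[of "Suc \<mu>" k 2] A k by simp
  have "\<mu> \<le> card B choose 2" using le_Suc_choose_two B by simp
  also have "\<dots> \<le> card Y choose 2"
    using finY by (intro binomial_right_mono card_mono) (auto simp: Y_def)
  finally have cY: "\<mu> \<le> card Y choose 2" .
  have "\<forall>Q \<in> Pts - (l1 \<union> l2). \<mu> \<le> card (persp l2 Q ` A \<inter> Y)"
  proof
    fix Q assume "Q \<in> Pts - (l1 \<union> l2)"
    moreover have "card (persp l2 Q ` A \<inter> b ` {..<k}) \<le> card (persp l2 Q ` A \<inter> Y)"
      using finY by (intro card_mono) (auto simp: Y_def)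
    ultimately show "\<mu> \<le> card (persp l2 Q ` A \<inter> Y)" using b(2) le_trans by blast
  qed
  hence "saturating Pts Lns \<mu> (A \<union> Y)" by (rule saturating_two_lines[OF lines A(1) Y cA cY])
  hence "s_min Pts Lns \<mu> \<le> card (A \<union> Y)" by (rule s_min_le_card)
  moreover have "card (A \<union> Y) \<le> card A + card Y" by (rule card_Un_le)
  moreover have "card Y \<le> card B + card (b ` {..<k})" unfolding Y_def by (rule card_Un_le)
  moreover have "card (b ` {..<k}) \<le> k" using card_image_le[of "{..<k}" b] by simp
  ultimately show ?thesis using A B by linarith
qed

lemma s_min_le_real:
  fixes x :: real
  assumes mu: "1 \<le> \<mu>" "\<mu> + 1 \<le> q" and x: "real \<mu> < x"
    and H: "(real \<mu> + 2) * ((real q + 1) * ln (real q + 1)) \<le> x * (x + 1 - real \<mu>)"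
  shows "real (s_min Pts Lns \<mu>) \<le> 2 * x + real \<mu> + 3"
proof -
  define k where "k = nat \<lceil>x\<rceil>"
  have kx: "x \<le> real k" "real k < x + 1" using x unfolding k_def by linarith+
  show ?thesis
  proof (cases "k \<le> q")
    case False
    have "real (s_min Pts Lns \<mu>) \<le> real q + real \<mu> + 1"
      using s_min_le_deterministic[OF mu(2)] by linarith
    thus ?thesis using False kx x by linarith
  next
    case True
    have "\<mu> + 1 \<le> k" using kx x by linarith
    have "0 < (real \<mu> + 2) * ln (real q + 1)" using mu by simp
    have "(real \<mu> + 2) * real q * ln (real q + 1) < (real \<mu> + 2) * ((real q + 1) * ln (real q + 1))"
      using \<open>0 < (real \<mu> + 2) * ln (real q + 1)\<close> by (simp add: algebra_simps)
    also have "\<dots> \<le> x * (x + 1 - real \<mu>)" by (rule H)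
    also have "\<dots> \<le> real k * (real k + 1 - real \<mu>)" using kx x by (intro mult_mono) auto
    finally have "real (s_min Pts Lns \<mu>) \<le> real (2 * k + \<mu> + 1)"
      using s_min_le_random[OF mu(1) \<open>\<mu> + 1 \<le> k\<close> True] by linarith
    thus ?thesis using kx by simp
  qed
qed

lemma s_min_le_sqrt_bound:
  fixes c D L :: real
  assumes mu: "1 \<le> \<mu>" "\<mu> + 1 \<le> q" and L: "L = sqrt ((real q + 1) * ln (real q + 1))"
    and cL: "real \<mu> < c * L" and quad: "(real \<mu> + 2) * L \<le> c * (c * L + 1 - real \<mu>)"
    and D: "real \<mu> + 1 \<le> 2 * (D - c) * L"
  shows "real (s_min Pts Lns \<mu>) \<le> 2 * D * L + 2"
proof -
  have L0: "0 \<le> L" unfolding L by simp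
  have "(real \<mu> + 2) * ((real q + 1) * ln (real q + 1)) = (real \<mu> + 2) * L * L"
    unfolding L by simp
  also have "\<dots> \<le> c * L * (c * L + 1 - real \<mu>)"
    using mult_right_mono[OF quad L0] by (simp add: algebra_simps)
  finally have "real (s_min Pts Lns \<mu>) \<le> 2 * (c * L) + real \<mu> + 3"
    by (rule s_min_le_real[OF mu cL])
  thus ?thesis using D by (simp add: algebra_simps)
qed

text \<open>The conditions on \<open>c\<close> and \<open>D\<close> are checked at \<open>L = 14\<close> and are monotone in \<open>L\<close>.\<close>
lemma s_min_le_sqrt_bound_of_ge_97:
  fixes c D :: real
  assumes mu: "1 \<le> \<mu>" "\<mu> + 1 \<le> q" and q: "97 \<le> q"
    and c: "real \<mu> < 14 * c" "real \<mu> + 2 + c * (real \<mu> - 1) / 14 \<le> c * c"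
    and D: "real \<mu> + 1 \<le> 28 * (D - c)"
  shows "real (s_min Pts Lns \<mu>) \<le> 2 * D * sqrt ((real q + 1) * ln (real q + 1)) + 2"
proof (rule s_min_le_sqrt_bound[OF mu refl])
  define L where "L = sqrt ((real q + 1) * ln (real q + 1))"
  have "2 \<le> ln (real q + 1)" using q le_ln_of_three_power_le[of 2] by simp
  hence "(real q + 1) * 2 \<le> (real q + 1) * ln (real q + 1)" by (intro mult_left_mono) auto
  moreover have "14\<^sup>2 \<le> (real q + 1) * 2" using q by simp
  ultimately have "sqrt (14\<^sup>2) \<le> L" unfolding L_def by (intro real_sqrt_le_mono) linarith
  hence L14: "14 \<le> L" by simp
  have c0: "0 < c" using c(1) mu by simp
  have "c * 14 \<le> c * L" using L14 c0 by (intro mult_left_mono) auto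
  thus "real \<mu> < c * L" using c(1) by linarith
  have "0 \<le> c * (real \<mu> - 1) / 14" using c0 mu by simp
  hence "0 \<le> c * c - real \<mu> - 2" using c(2) by linarith
  have "c * (real \<mu> - 1) \<le> 14 * (c * c - real \<mu> - 2)" using c(2) by simp
  also have "\<dots> \<le> L * (c * c - real \<mu> - 2)"
    using \<open>0 \<le> c * c - real \<mu> - 2\<close> L14 by (rule mult_right_mono[rotated])
  finally show "(real \<mu> + 2) * L \<le> c * (c * L + 1 - real \<mu>)" by (simp add: algebra_simps)
  have "(real \<mu> + 1) \<le> 2 * (D - c) * 14" using D by simp
  also have "\<dots> \<le> 2 * (D - c) * L" using D L14 by (intro mult_left_mono) auto
  finally show "real \<mu> + 1 \<le> 2 * (D - c) * L" .
qed

lemma s_min_le_sqrt_bound_of_ge_3: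
  fixes D L :: real
  assumes mu: "2 \<le> \<mu>" "\<mu> + 1 \<le> q" and D: "real \<mu> + 1 \<le> D"
    and L: "L = sqrt ((real q + 1) * ln (real q + 1))" "3 \<le> L"
  shows "real (s_min Pts Lns \<mu>) \<le> 2 * D * L + 2"
proof -
  define c where "c = (real \<mu> + 3) / 2"
  show ?thesis
  proof (rule s_min_le_sqrt_bound[OF _ mu(2) L(1)])
    have "c * 3 \<le> c * L" using L(2) by (intro mult_left_mono) (auto simp: c_def)
    moreover have "real \<mu> < c * 3" unfolding c_def by simp
    ultimately show "real \<mu> < c * L" by linarith
    define t where "t = c * (real \<mu> - 1)"
    have e: "c * c - real \<mu> - 2 = (t + 2) / 2"
      unfolding c_def t_def by (simp add: field_simps)
    have "0 \<le> t" using mu unfolding c_def t_def by simp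
    hence "t \<le> 3 * (c * c - real \<mu> - 2)" "0 \<le> c * c - real \<mu> - 2"
      unfolding e by simp_all
    hence "t \<le> L * (c * c - real \<mu> - 2)" using mult_right_mono[OF L(2)] by (meson order_trans)
    thus "(real \<mu> + 2) * L \<le> c * (c * L + 1 - real \<mu>)" unfolding t_def by (simp add: algebra_simps)
    have "2 * (D - c) * 3 = 6 * D - 3 * real \<mu> - 9" unfolding c_def by (simp add: field_simps)
    hence "real \<mu> + 1 \<le> 2 * (D - c) * 3" using mu D by simp
    also have "\<dots> \<le> 2 * (D - c) * L" using mu D L(2) unfolding c_def by (intro mult_left_mono) auto
    finally show "real \<mu> + 1 \<le> 2 * (D - c) * L" .
  qed (use mu in simp)
qed

text \<open>For \<open>L < 3\<close> the plane is small (\<open>q < 8\<close>) and the deterministic bound suffices.\<close>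
lemma s_min_le_sqrt_bound_of_Suc_le:
  fixes D :: real
  assumes mu: "2 \<le> \<mu>" "\<mu> + 1 \<le> q" and D: "real \<mu> + 1 \<le> D"
  shows "real (s_min Pts Lns \<mu>) \<le> 2 * D * sqrt ((real q + 1) * ln (real q + 1)) + 2"
proof -
  define L where "L = sqrt ((real q + 1) * ln (real q + 1))"
  have "1 \<le> ln (real q + 1)" using mu le_ln_of_three_power_le[of 1] by simp
  hence "real q + 1 \<le> (real q + 1) * ln (real q + 1)" by simp
  hence L: "sqrt (real q + 1) \<le> L" unfolding L_def by (rule real_sqrt_le_mono)
  have "real (s_min Pts Lns \<mu>) \<le> 2 * D * L + 2"
  proof (cases "3 \<le> L")
    case True
    then show ?thesis by (rule s_min_le_sqrt_bound_of_ge_3[OF mu D L_def])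
  next
    case False
    have "sqrt 4 \<le> sqrt (real q + 1)" using mu by (intro real_sqrt_le_mono) simp
    hence "2 \<le> L" using L by simp
    have "sqrt (real q + 1) < sqrt 9" using L False by simp
    hence "real q < 8" by (simp only: real_sqrt_less_iff)
    have "real (s_min Pts Lns \<mu>) \<le> real q + real \<mu> + 1"
      using s_min_le_deterministic[OF mu(2)] by linarith
    also have "\<dots> \<le> 2 * ((real \<mu> + 1) * 2) + 2" using \<open>real q < 8\<close> mu by simp
    also have "\<dots> \<le> 2 * (D * L) + 2" using mult_mono[OF D \<open>2 \<le> L\<close>] D by simp
    finally show ?thesis by simp
  qed
  thus ?thesis unfolding L_def .
qed

end

theorem theorem3:
  fixes Pts :: "'a set" and Lns :: "'a set set" and q \<mu> :: nat and \<delta> :: real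
  assumes plane: "projective_plane_of_order Pts Lns q"
    and mu: "\<mu> \<ge> 2"
    and delta: "\<delta> = 1 / sqrt ((real q + 1) * ln (real q + 1))"
  shows "(\<mu> = 2 \<and> q \<ge> 97 \<longrightarrow>
            real (s_min Pts Lns \<mu>) \<le> 2 * 2.4 * sqrt ((real q + 1) * ln (real q + 1)) + 2)
       \<and> (\<mu> = 3 \<and> q \<ge> 181 \<longrightarrow>
            real (s_min Pts Lns \<mu>) \<le> 2 * 2.6 * sqrt ((real q + 1) * ln (real q + 1)) + 2)
       \<and> (\<mu> = 4 \<and> q \<ge> 125 \<longrightarrow>
            real (s_min Pts Lns \<mu>) \<le> 2 * 2.8 * sqrt ((real q + 1) * ln (real q + 1)) + 2)
       \<and> (real \<mu> \<le> sqrt (real q) \<and> q \<ge> 4 \<longrightarrow>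
            real (s_min Pts Lns \<mu>) \<le> 2 * (real \<mu> + 1) * sqrt ((real q + 1) * ln (real q + 1)) + 2)
       \<and> (real \<mu> \<le> ((1 - \<delta>) * real q - \<delta> + 1) / 2 + 1 \<and> q \<ge> 3 \<longrightarrow>
            real (s_min Pts Lns \<mu>) \<le> 2 * (2 * real \<mu> - 1) * sqrt ((real q + 1) * ln (real q + 1)) + 2)"
proof -
  interpret plane_of_order Pts Lns q using plane by unfold_locales
  have a: "real (s_min Pts Lns \<mu>) \<le> 2 * 2.4 * sqrt ((real q + 1) * ln (real q + 1)) + 2"
    if "\<mu> = 2" "97 \<le> q"
    using that by (intro s_min_le_sqrt_bound_of_ge_97[where c = "21/10"]) simp_all
  have b: "real (s_min Pts Lns \<mu>) \<le> 2 * 2.6 * sqrt ((real q + 1) * ln (real q + 1)) + 2"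
    if "\<mu> = 3" "181 \<le> q"
    using that by (intro s_min_le_sqrt_bound_of_ge_97[where c = "235/100"]) simp_all
  have c: "real (s_min Pts Lns \<mu>) \<le> 2 * 2.8 * sqrt ((real q + 1) * ln (real q + 1)) + 2"
    if "\<mu> = 4" "125 \<le> q"
    using that by (intro s_min_le_sqrt_bound_of_ge_97[where c = "26/10"]) simp_all
  have d: "real (s_min Pts Lns \<mu>) \<le> 2 * (real \<mu> + 1) * sqrt ((real q + 1) * ln (real q + 1)) + 2"
    if "real \<mu> \<le> sqrt (real q)" "4 \<le> q"
    using that by (intro s_min_le_sqrt_bound_of_Suc_le[OF mu] Suc_le_of_le_sqrt) simp_all
  have e: "real (s_min Pts Lns \<mu>) \<le> 2 * (2 * real \<mu> - 1) * sqrt ((real q + 1) * ln (real q + 1)) + 2"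
    if "real \<mu> \<le> ((1 - \<delta>) * real q - \<delta> + 1) / 2 + 1" "3 \<le> q"
  proof (intro s_min_le_sqrt_bound_of_Suc_le[OF mu] Suc_le_of_less_half[OF _ \<open>3 \<le> q\<close>])
    have "0 < \<delta> * (real q + 1)" using that(2) delta by simp
    moreover have "((1 - \<delta>) * real q - \<delta> + 1) / 2 + 1 = (real q + 3) / 2 - \<delta> * (real q + 1) / 2"
      by (simp add: field_simps)
    ultimately show "real \<mu> < (real q + 3) / 2" using that(1) by linarith
  qed (use mu in simp)
  show ?thesis using a b c d e by blast
qed

end
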